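(* Hourglass persistence is more expressive than FB-persistence: for every graph $G$ with filtration function $f$, the FB-persistence sequence of $(G,f)$ is one of the hourglass sequences of $(G,f)$; and there exist graphs $G,H$ with the degree filtration whose FB-persistence diagrams coincide in all degrees, but for which some hourglass schedule (a prescribed order, in terms of the indices of the intermediate complexes, of including and contracting them), applied to both, yields different persistence diagrams.
   Context: Graphs are finite, undirected, possibly with self-loops and multi-edges. A filtration function on $G=(V,E)$ is $f:V\cup E\to\mathbb{R}$ with $f(v),f(w)\le f(e)$ for each edge $e=(v,w)$; degree filtration: $f(v)=\deg v$, $f(e)=\max(f(v),f(w))$. With distinct values $a_0<\dots<a_n$, $G_{-1}=\emptyset$, $G_i=f^{-1}((-\infty,a_i])$, and the intermediate complex $\mathrm{IC}_i(G,f)$ is the subgraph formed by the vertices and edges of $G_i\setminus G_{i-1}$ together with endpoints of those edges. Persistence diagrams of a sequence of spaces and continuous maps are those of the interval decomposition of $H_k(-;\mathbb{Z}/2)$ applied to it (indexed by positions). FB-persistence: the sequence $G_0\subset\dots\subset G_n=G\to G/\mathrm{IC}_n\to\dots\to\text{point}$ which first includes and then contracts $\mathrm{IC}_n,\mathrm{IC}_{n-1},\dots,\mathrm{IC}_0$ in turn (each contraction collapses the piece together with the point to which previously contracted pieces were collapsed). An hourglass sequence is any sequence starting at $\emptyset$ in which each step either includes (adjoins) some $\mathrm{IC}_j$, or contracts (quotients, together with the previously contracted point) some $\mathrm{IC}_j$ that has already been included, every $\mathrm{IC}_j$ being included before it is contracted; hourglass persistence diagrams are the persistence diagrams of such sequences.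 *)

theory Defs
  imports Complex_Main "HOL-Library.Z2" "HOL-Library.Function_Algebras"
begin

text \<open>A finite graph with possible self-loops and multi-edges: a vertex set V, an edge set E
  and an endpoint map ends (each edge has an unordered pair of endpoints, a self-loop has
  equal endpoints).\<close>

definition wf_graph :: "'v set \<Rightarrow> 'e set \<Rightarrow> ('e \<Rightarrow> 'v \<times> 'v) \<Rightarrow> bool" where
  "wf_graph V E ends \<longleftrightarrow> finite V \<and> finite E \<and>
     (\<forall>e\<in>E. fst (ends e) \<in> V \<and> snd (ends e) \<in> V)"

definition filtration :: "'v set \<Rightarrow> 'e set \<Rightarrow> ('e \<Rightarrow> 'v \<times> 'v) \<Rightarrow> ('v \<Rightarrow> real) \<Rightarrow> ('e \<Rightarrow> real) \<Rightarrow> bool" where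
  "filtration V E ends fv fe \<longleftrightarrow>
     (\<forall>e\<in>E. fv (fst (ends e)) \<le> fe e \<and> fv (snd (ends e)) \<le> fe e)"

text \<open>Degree (a self-loop contributes 2) and the degree filtration.\<close>
definition degree :: "'e set \<Rightarrow> ('e \<Rightarrow> 'v \<times> 'v) \<Rightarrow> 'v \<Rightarrow> nat" where
  "degree E ends v = card {e\<in>E. fst (ends e) = v} + card {e\<in>E. snd (ends e) = v}"

definition deg_fv :: "'e set \<Rightarrow> ('e \<Rightarrow> 'v \<times> 'v) \<Rightarrow> 'v \<Rightarrow> real" where
  "deg_fv E ends v = real (degree E ends v)"

definition deg_fe :: "'e set \<Rightarrow> ('e \<Rightarrow> 'v \<times> 'v) \<Rightarrow> 'e \<Rightarrow> real" where
  "deg_fe E ends e = max (deg_fv E ends (fst (ends e))) (deg_fv E ends (snd (ends e)))"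

type_synonym ('v, 'e) subgraph = "'v set \<times> 'e set"

definition fvals :: "'v set \<Rightarrow> 'e set \<Rightarrow> ('v \<Rightarrow> real) \<Rightarrow> ('e \<Rightarrow> real) \<Rightarrow> real set" where
  "fvals V E fv fe = fv ` V \<union> fe ` E"

text \<open>n+1 = number of distinct values; the values a_0 < ... < a_n.\<close>
definition nlev :: "'v set \<Rightarrow> 'e set \<Rightarrow> ('v \<Rightarrow> real) \<Rightarrow> ('e \<Rightarrow> real) \<Rightarrow> nat" where
  "nlev V E fv fe = card (fvals V E fv fe)"

definition lev :: "'v set \<Rightarrow> 'e set \<Rightarrow> ('v \<Rightarrow> real) \<Rightarrow> ('e \<Rightarrow> real) \<Rightarrow> nat \<Rightarrow> real" where
  "lev V E fv fe i = sorted_list_of_set (fvals V E fv fe) ! i"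

definition sublevel :: "'v set \<Rightarrow> 'e set \<Rightarrow> ('v \<Rightarrow> real) \<Rightarrow> ('e \<Rightarrow> real) \<Rightarrow> nat \<Rightarrow> ('v,'e) subgraph" where
  "sublevel V E fv fe i = ({v\<in>V. fv v \<le> lev V E fv fe i}, {e\<in>E. fe e \<le> lev V E fv fe i})"

text \<open>IC_j: cells of G_j minus G_{j-1} (i.e. cells of value a_j) together with the endpoints
  of those edges.\<close>
definition IC :: "'v set \<Rightarrow> 'e set \<Rightarrow> ('e \<Rightarrow> 'v \<times> 'v) \<Rightarrow> ('v \<Rightarrow> real) \<Rightarrow> ('e \<Rightarrow> real) \<Rightarrow> nat \<Rightarrow> ('v,'e) subgraph" where
  "IC V E ends fv fe j =
     ({v\<in>V. fv v = lev V E fv fe j} \<union>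
      {x. \<exists>e\<in>E. fe e = lev V E fv fe j \<and> (x = fst (ends e) \<or> x = snd (ends e))},
      {e\<in>E. fe e = lev V E fv fe j})"

definition sg_Union :: "('v,'e) subgraph set \<Rightarrow> ('v,'e) subgraph" where
  "sg_Union F = (\<Union> (fst ` F), \<Union> (snd ` F))"

text \<open>Every space occurring is a quotient X/A of a subgraph X of G by a subgraph A of X
  (A collapsed to a single point; X/{} = X). We represent it by the pair (X, A).
  All maps in the sequences are induced by the identity on the cells of G.\<close>

type_synonym ('v, 'e) space = "('v,'e) subgraph \<times> ('v,'e) subgraph"

definition fb_seq :: "'v set \<Rightarrow> 'e set \<Rightarrow> ('e \<Rightarrow> 'v \<times> 'v) \<Rightarrow> ('v \<Rightarrow> real) \<Rightarrow> ('e \<Rightarrow> real) \<Rightarrow> ('v,'e) space list" where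
  "fb_seq V E ends fv fe =
     map (\<lambda>i. (sublevel V E fv fe i, ({}, {}))) [0..<nlev V E fv fe] @
     map (\<lambda>k. ((V, E), sg_Union (IC V E ends fv fe ` {k..<nlev V E fv fe})))
         (rev [0..<nlev V E fv fe])"

datatype hg_op = Inc nat | Con nat

definition valid_schedule :: "nat \<Rightarrow> hg_op list \<Rightarrow> bool" where
  "valid_schedule N ops \<longleftrightarrow> distinct ops \<and>
     (\<forall>op\<in>set ops. case op of Inc j \<Rightarrow> j < N | Con j \<Rightarrow> j < N) \<and>
     (\<forall>p<length ops. \<forall>j. ops ! p = Con j \<longrightarrow> Inc j \<in> set (take p ops))"

definition hg_space :: "(nat \<Rightarrow> ('v,'e) subgraph) \<Rightarrow> hg_op list \<Rightarrow> nat \<Rightarrow> ('v,'e) space" where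
  "hg_space ICf ops p =
     (sg_Union {ICf j | j. Inc j \<in> set (take p ops)}, sg_Union {ICf j | j. Con j \<in> set (take p ops)})"

text \<open>The hourglass sequence of a schedule (starting with the empty space).\<close>
definition hg_seq :: "(nat \<Rightarrow> ('v,'e) subgraph) \<Rightarrow> hg_op list \<Rightarrow> ('v,'e) space list" where
  "hg_seq ICf ops = map (hg_space ICf ops) [0..<Suc (length ops)]"

definition zscale :: "bit \<Rightarrow> ('a \<Rightarrow> bit) \<Rightarrow> ('a \<Rightarrow> bit)" where
  "zscale c x = (\<lambda>i. c * x i)"

definition zdim :: "('a \<Rightarrow> bit) set \<Rightarrow> nat" where
  "zdim = vector_space.dim zscale"

text \<open>Quotient vertex: None is the collapsed point.\<close>
definition qv :: "('v,'e) subgraph \<Rightarrow> 'v \<Rightarrow> 'v option" where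
  "qv A v = (if v \<in> fst A then None else Some v)"

definition qverts :: "('v,'e) space \<Rightarrow> 'v option set" where
  "qverts S = qv (snd S) ` fst (fst S)"

definition qedges :: "('v,'e) space \<Rightarrow> 'e set" where
  "qedges S = snd (fst S) - snd (snd S)"

definition chains0 :: "('v,'e) space \<Rightarrow> ('v option \<Rightarrow> bit) set" where
  "chains0 S = {c. \<forall>w. w \<notin> qverts S \<longrightarrow> c w = 0}"

definition chains1 :: "('v,'e) space \<Rightarrow> ('e \<Rightarrow> bit) set" where
  "chains1 S = {c. \<forall>e. e \<notin> qedges S \<longrightarrow> c e = 0}"

definition incid :: "('e \<Rightarrow> 'v \<times> 'v) \<Rightarrow> ('v,'e) subgraph \<Rightarrow> 'v option \<Rightarrow> 'e \<Rightarrow> bit" where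
  "incid ends A w e = (if qv A (fst (ends e)) = w then 1 else 0) + (if qv A (snd (ends e)) = w then 1 else 0)"

definition bd :: "('e \<Rightarrow> 'v \<times> 'v) \<Rightarrow> ('v,'e) space \<Rightarrow> ('e \<Rightarrow> bit) \<Rightarrow> ('v option \<Rightarrow> bit)" where
  "bd ends S c = (\<lambda>w. \<Sum>e\<in>qedges S. c e * incid ends (snd S) w e)"

definition cycles1 :: "('e \<Rightarrow> 'v \<times> 'v) \<Rightarrow> ('v,'e) space \<Rightarrow> ('e \<Rightarrow> bit) set" where
  "cycles1 ends S = {c \<in> chains1 S. bd ends S c = 0}"

definition bounds0 :: "('e \<Rightarrow> 'v \<times> 'v) \<Rightarrow> ('v,'e) space \<Rightarrow> ('v option \<Rightarrow> bit) set" where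
  "bounds0 ends S = bd ends S ` chains1 S"

text \<open>The cellular map X/A \<rightarrow> Y/B induced by the identity (X \<subseteq> Y, A \<subseteq> B).\<close>
definition vmap :: "('v,'e) space \<Rightarrow> 'v option \<Rightarrow> 'v option" where
  "vmap T u = (case u of None \<Rightarrow> None | Some v \<Rightarrow> qv (snd T) v)"

definition push0 :: "('v,'e) space \<Rightarrow> ('v,'e) space \<Rightarrow> ('v option \<Rightarrow> bit) \<Rightarrow> ('v option \<Rightarrow> bit)" where
  "push0 S T c = (\<lambda>w. \<Sum>u\<in>{u \<in> qverts S. vmap T u = w}. c u)"

definition push1 :: "('v,'e) space \<Rightarrow> ('e \<Rightarrow> bit) \<Rightarrow> ('e \<Rightarrow> bit)" where
  "push1 T c = (\<lambda>e. if e \<in> qedges T then c e else 0)"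

text \<open>Rank of the induced map H_k(S;Z/2) \<rightarrow> H_k(T;Z/2). H_0 = C_0/B_0, H_1 = Z_1,
  H_k = 0 for k \<ge> 2 (graphs are 1-dimensional).\<close>
definition hrank :: "('e \<Rightarrow> 'v \<times> 'v) \<Rightarrow> nat \<Rightarrow> ('v,'e) space \<Rightarrow> ('v,'e) space \<Rightarrow> nat" where
  "hrank ends k S T =
     (if k = 0 then zdim (push0 S T ` chains0 S \<union> bounds0 ends T) - zdim (bounds0 ends T)
      else if k = 1 then zdim (push1 T ` cycles1 ends S)
      else 0)"

definition prk :: "('e \<Rightarrow> 'v \<times> 'v) \<Rightarrow> ('v,'e) space list \<Rightarrow> nat \<Rightarrow> int \<Rightarrow> int \<Rightarrow> int" where
  "prk ends Ss k i j =
     (if 0 \<le> i \<and> i \<le> j \<and> j < int (length Ss)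
      then int (hrank ends k (Ss ! nat i) (Ss ! nat j)) else 0)"

text \<open>Multiplicity of the interval [b, d] (positions) in the degree-k persistence diagram,
  i.e. in the interval decomposition of H_k applied to the sequence.\<close>
definition pdiag :: "('e \<Rightarrow> 'v \<times> 'v) \<Rightarrow> ('v,'e) space list \<Rightarrow> nat \<Rightarrow> nat \<times> nat \<Rightarrow> int" where
  "pdiag ends Ss k bd' =
     (let b = int (fst bd'); d = int (snd bd') in
      if b \<le> d \<and> d < int (length Ss)
      then prk ends Ss k b d - prk ends Ss k (b - 1) d - prk ends Ss k b (d + 1)
           + prk ends Ss k (b - 1) (d + 1)
      else 0)"

end

theory Submission
  imports Defs "HOL-Library.Option_ord" "HOL-Library.Indicator_Function"
begin

text \<open>Running the schedule that includes IC_0, ..., IC_n and then contracts IC_n, ..., IC_0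
  reproduces the FB-sequence: since an edge has a value at least that of its endpoints,
  IC_0 \<union> ... \<union> IC_i is exactly the sublevel graph G_i, and IC_k \<union> ... \<union> IC_n is what
  FB-persistence has contracted after its step k.

  For the separating example let G consist of a vertex 0 with a loop, joined to a leaf 1, and
  a separate vertex 2 with a loop; let H consist of a vertex 0 with a loop and a path 1 - 2 - 3
  with a loop at 3. Under the degree filtration both take the values 1 < 2 < 3, and all ranks
  of the maps in their FB-sequences agree. Now include IC_0, IC_1, IC_2 and contract IC_0, IC_2,
  IC_1. In H, contracting IC_0 \<union> IC_2 collapses the vertices 1, 2, 3 and so closes the edge from
  1 to 2, which lies in IC_1, into a loop: a class of H_1 born and killed at position 5.
  Nothing of this kind happens in G.

  All homology ranks are computed by Gaussian elimination over Z/2, a chain being represented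
  by its support.\<close>

section \<open>Linear algebra over Z/2\<close>

context vector_space
begin

lemma dim_insert_notin_span:
  assumes "finite S" "x \<notin> span S"
  shows "dim (insert x S) = Suc (dim S)"
proof -
  obtain B where B: "B \<subseteq> S" "independent B" "S \<subseteq> span B" "card B = dim S"
    using basis_exists by blast
  have "finite B"
    using B(1) assms(1) finite_subset by blast
  have "span B = span S"
    using B(1,3) by (simp add: span_eq span_superset subset_trans)
  then have "x \<notin> span B"
    using assms(2) by simp
  then have "x \<notin> B" "independent (insert x B)"
    using span_base independent_insertI[OF _ B(2)] by auto
  moreover have "insert x S \<subseteq> span (insert x B)"
    using B(3) span_mono[of B "insert x B"] span_base[of x "insert x B"] by blast
  then have "card (insert x B) = dim (insert x S)"
    using B(1) \<open>independent (insert x B)\<close> by (intro basis_card_eq_dim) auto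
  ultimately show ?thesis
    using \<open>finite B\<close> B(4) by simp
qed

lemma span_insert_add_if:
  "span (insert v ((\<lambda>w. if P w then f w + v else f w) ` S)) = span (insert v (f ` S))"
    (is "span ?A = span ?B")
proof -
  have v: "v \<in> span ?A" "v \<in> span ?B"
    by (simp_all add: span_base)
  have "(if P w then f w + v else f w) \<in> span ?B" if "w \<in> S" for w
    using that v(2) by (simp add: span_base span_add_eq2)
  then have "?A \<subseteq> span ?B"
    using v(2) by blast
  moreover have "f w \<in> span ?A" if "w \<in> S" for w
  proof -
    have "(if P w then f w + v else f w) \<in> span ?A"
      using that by (simp add: span_base)
    then show ?thesis
      using v(1) by (simp add: span_add_eq2 split: if_splits)
  qed
  then have "?B \<subseteq> span ?A"
    using v(1) by blast
  ultimately show ?thesis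
    by (simp only: span_eq)
qed

end

interpretation Z: vector_space "zscale :: bit \<Rightarrow> ('a \<Rightarrow> bit) \<Rightarrow> 'a \<Rightarrow> bit"
  by unfold_locales (auto simp: zscale_def fun_eq_iff algebra_simps)

lemma sum_fun_apply: "sum f A x = (\<Sum>a\<in>A. f a x)"
  by (induct A rule: infinite_finite_induct) auto

lemma indicator_sym_diff: "(indicator (sym_diff A B) :: 'a \<Rightarrow> bit) = indicator A + indicator B"
  by (auto simp: indicator_def fun_eq_iff)

lemma indicator_eq_zero_iff: "(indicator A :: 'a \<Rightarrow> bit) = 0 \<longleftrightarrow> A = {}"
  by (auto simp: indicator_def fun_eq_iff)

lemma span_indicators_vanish:
  assumes "\<forall>w\<in>A. p \<notin> w" "g \<in> Z.span ((indicator :: 'a set \<Rightarrow> 'a \<Rightarrow> bit) ` A)"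
  shows "g p = 0"
proof -
  have "Z.subspace {g :: 'a \<Rightarrow> bit. g p = 0}"
    by (auto simp: Z.subspace_def zscale_def)
  moreover have "indicator ` A \<subseteq> {g :: 'a \<Rightarrow> bit. g p = 0}"
    using assms(1) by (auto simp: indicator_def)
  ultimately show ?thesis
    using assms(2) Z.span_minimal by blast
qed

text \<open>A vector over Z/2 is given by its support; the pivot of a nonzero row is its least element.\<close>

fun elim_rank :: "'a::linorder set list \<Rightarrow> nat" where
  "elim_rank [] = 0"
| "elim_rank (v # vs) =
    (if v = {} then elim_rank vs
     else Suc (elim_rank (map (\<lambda>w. if Min v \<in> w then sym_diff w v else w) vs)))"

lemma dim_indicators_elim_rank:
  "\<forall>v\<in>set vs. finite v \<Longrightarrow> Z.dim ((indicator :: _ \<Rightarrow> _ \<Rightarrow> bit) ` set vs) = elim_rank vs"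
proof (induction vs rule: elim_rank.induct)
  case 1
  then show ?case
    using Z.dim_eq_card_independent[OF Z.independent_empty] by simp
next
  case (2 v vs)
  show ?case
  proof (cases "v = {}")
    case True
    then show ?thesis
      using 2 by (simp add: indicator_eq_zero_iff[THEN iffD2] Z.span_eq_dim[OF Z.span_insert_0])
  next
    case False
    define p where "p = Min v"
    define ws where "ws = map (\<lambda>w. if p \<in> w then sym_diff w v else w) vs"
    have "p \<in> v"
      using False 2(3) by (simp add: p_def)
    have IH: "Z.dim (indicator ` set ws) = elim_rank ws"
      using 2(2)[OF False] 2(3) by (auto simp: ws_def p_def)
    have ws: "(indicator :: _ \<Rightarrow> _ \<Rightarrow> bit) ` set ws =
        (\<lambda>w. if p \<in> w then indicator w + indicator v else indicator w) ` set vs"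
      unfolding ws_def set_map image_comp by (rule image_cong) (simp_all add: indicator_sym_diff)
    have "\<forall>w\<in>set ws. p \<notin> w"
      using \<open>p \<in> v\<close> by (auto simp: ws_def)
    then have "indicator v \<notin> Z.span (indicator ` set ws)"
      using span_indicators_vanish \<open>p \<in> v\<close> by fastforce
    then have "Z.dim (insert (indicator v) (indicator ` set ws)) = Suc (elim_rank ws)"
      by (simp add: Z.dim_insert_notin_span IH)
    moreover have "Z.span (insert (indicator v) (indicator ` set ws)) = Z.span (indicator ` set (v # vs))"
      unfolding ws using Z.span_insert_add_if by simp
    ultimately have "Z.dim (indicator ` set (v # vs)) = Suc (elim_rank ws)"
      using Z.span_eq_dim by metis
    then show ?thesis
      using False by (simp add: ws_def p_def)
  qed
qed

section \<open>Homology ranks of quotient graphs\<close>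

definition edge_bd :: "('e \<Rightarrow> 'v \<times> 'v) \<Rightarrow> ('v,'e) space \<Rightarrow> 'e \<Rightarrow> 'v option set" where
  "edge_bd ends S e = sym_diff {qv (snd S) (fst (ends e))} {qv (snd S) (snd (ends e))}"

definition edges_bd :: "('e \<Rightarrow> 'v \<times> 'v) \<Rightarrow> ('v,'e) space \<Rightarrow> 'e list \<Rightarrow> 'v option set" where
  "edges_bd ends S es = foldr (\<lambda>e. sym_diff (edge_bd ends S e)) es {}"

lemma sum_zscale_indicator:
  assumes "finite Q" "A \<subseteq> Q"
  shows "(\<Sum>e\<in>Q. zscale (indicator A e) (g e)) = (\<Sum>e\<in>A. g e)"
  using assms by (intro sum.mono_neutral_cong_right) (auto simp: zscale_def fun_eq_iff)

lemma incid_eq_indicator: "incid ends (snd S) w e = indicator (edge_bd ends S e) w"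
  by (auto simp: incid_def edge_bd_def)

lemma bd_eq_sum:
  "finite (qedges S) \<Longrightarrow>
    bd ends S c = (\<Sum>e\<in>qedges S. zscale (c e) (indicator (edge_bd ends S e)))"
  by (simp add: fun_eq_iff bd_def sum_fun_apply zscale_def incid_eq_indicator)

lemma push0_eq_sum:
  assumes "finite (qverts S)"
  shows "push0 S T c = (\<Sum>u\<in>qverts S. zscale (c u) (indicator {vmap T u}))"
proof
  fix w
  have "(\<Sum>u\<in>qverts S. zscale (c u) (indicator {vmap T u})) w =
      (\<Sum>u\<in>qverts S. if vmap T u = w then c u else 0)"
    unfolding sum_fun_apply by (intro sum.cong) (auto simp: zscale_def)
  also have "\<dots> = push0 S T c w"
    using assms by (simp add: push0_def sum.inter_filter)
  finally show "push0 S T c w = (\<Sum>u\<in>qverts S. zscale (c u) (indicator {vmap T u})) w" ..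
qed

lemma bd_indicator_edges:
  assumes "finite (qedges S)" "distinct es" "set es \<subseteq> qedges S"
  shows "bd ends S (indicator (set es)) = indicator (edges_bd ends S es)"
proof -
  have "bd ends S (indicator (set es)) = (\<Sum>e\<in>set es. indicator (edge_bd ends S e))"
    using assms by (simp add: bd_eq_sum sum_zscale_indicator)
  also have "\<dots> = indicator (edges_bd ends S es)"
    using assms(2) by (induction es) (auto simp: edges_bd_def indicator_sym_diff)
  finally show ?thesis .
qed

lemma span_bounds0:
  assumes "finite (qedges T)"
  shows "Z.span (bounds0 ends T) = Z.span (indicator ` edge_bd ends T ` qedges T)"
proof -
  have "bounds0 ends T \<subseteq> Z.span (indicator ` edge_bd ends T ` qedges T)"
    using assms by (auto simp: bounds0_def bd_eq_sum intro!: Z.span_sum Z.span_scale intro: Z.span_base)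
  moreover have "indicator (edge_bd ends T e) \<in> bounds0 ends T" if "e \<in> qedges T" for e
  proof -
    have "indicator (edge_bd ends T e) = bd ends T (indicator (set [e]))"
      using assms that bd_indicator_edges[of T "[e]" ends] by (simp add: edges_bd_def)
    moreover have "indicator {e} \<in> chains1 T"
      using that by (auto simp: chains1_def split: split_indicator)
    ultimately show ?thesis
      by (simp add: bounds0_def)
  qed
  then have "indicator ` edge_bd ends T ` qedges T \<subseteq> Z.span (bounds0 ends T)"
    by (auto intro: Z.span_base)
  ultimately show ?thesis
    by (simp only: Z.span_eq)
qed

lemma span_push0_chains0:
  assumes "finite (qverts S)"
  shows "Z.span (push0 S T ` chains0 S) = Z.span (indicator ` (\<lambda>u. {vmap T u}) ` qverts S)"
proof -
  have "push0 S T ` chains0 S \<subseteq> Z.span (indicator ` (\<lambda>u. {vmap T u}) ` qverts S)"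
    using assms by (auto simp: push0_eq_sum intro!: Z.span_sum Z.span_scale intro: Z.span_base)
  moreover have "indicator {vmap T u} \<in> push0 S T ` chains0 S" if "u \<in> qverts S" for u
  proof -
    have "indicator {vmap T u} = push0 S T (indicator {u})"
      using assms that by (simp add: push0_eq_sum sum_zscale_indicator)
    moreover have "indicator {u} \<in> chains0 S"
      using that by (auto simp: chains0_def split: split_indicator)
    ultimately show ?thesis
      by simp
  qed
  then have "indicator ` (\<lambda>u. {vmap T u}) ` qverts S \<subseteq> Z.span (push0 S T ` chains0 S)"
    by (auto intro: Z.span_base)
  ultimately show ?thesis
    by (simp only: Z.span_eq)
qed

lemma hrank0_eq_dim_indicators:
  assumes "finite (qverts S)" "finite (qedges T)"
  shows "hrank ends 0 S T =
    Z.dim (indicator ` ((\<lambda>u. {vmap T u}) ` qverts S \<union> edge_bd ends T ` qedges T)) -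
    Z.dim (indicator ` edge_bd ends T ` qedges T)"
proof -
  have "Z.span (push0 S T ` chains0 S \<union> bounds0 ends T) =
      Z.span ((indicator ` (\<lambda>u. {vmap T u}) ` qverts S) \<union> indicator ` edge_bd ends T ` qedges T)"
    using assms by (simp add: Z.span_Un span_bounds0 span_push0_chains0)
  then have "Z.dim (push0 S T ` chains0 S \<union> bounds0 ends T) =
      Z.dim ((indicator ` (\<lambda>u. {vmap T u}) ` qverts S) \<union> indicator ` edge_bd ends T ` qedges T)"
    by (rule Z.span_eq_dim)
  moreover have "Z.dim (bounds0 ends T) = Z.dim (indicator ` edge_bd ends T ` qedges T)"
    by (rule Z.span_eq_dim[OF span_bounds0[OF assms(2)]])
  ultimately show ?thesis
    by (simp add: hrank_def zdim_def image_Un)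
qed

lemma push1_cycles1_eq_indicators:
  fixes S T :: "('v, 'e::linorder) space"
  assumes "finite (qedges S)"
  shows "push1 T ` cycles1 ends S =
    indicator ` set (map (\<lambda>es. set es \<inter> qedges T)
      (filter (\<lambda>es. edges_bd ends S es = {}) (subseqs (sorted_list_of_set (qedges S)))))"
    (is "?L = ?R")
proof
  let ?es = "sorted_list_of_set (qedges S)"
  have es: "set ?es = qedges S" "distinct ?es"
    using assms by auto
  have push1: "push1 T (indicator A) = indicator (A \<inter> qedges T)" for A
    by (auto simp: push1_def fun_eq_iff split: split_indicator)
  show "?L \<subseteq> ?R"
  proof
    fix x assume "x \<in> ?L"
    then obtain c where c: "c \<in> chains1 S" "bd ends S c = 0" "x = push1 T c"
      by (auto simp: cycles1_def)
    define F where "F = {e. c e \<noteq> 0}"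
    have "c = indicator F"
      by (auto simp: F_def fun_eq_iff split: split_indicator)
    have "F \<subseteq> qedges S"
      using c(1) by (auto simp: F_def chains1_def)
    then obtain l where l: "l \<in> set (subseqs ?es)" "set l = F"
      using subset_subseqs[of F ?es] es by auto
    have "indicator (edges_bd ends S l) = (0 :: _ \<Rightarrow> bit)"
      using c(2) \<open>c = indicator F\<close> bd_indicator_edges[OF assms subseqs_distinctD[OF l(1) es(2)]]
        l \<open>F \<subseteq> qedges S\<close> by simp
    then have "edges_bd ends S l = {}"
      by (simp add: indicator_eq_zero_iff)
    then show "x \<in> ?R"
      using l c(3) \<open>c = indicator F\<close> push1 by auto
  qed
  show "?R \<subseteq> ?L"
  proof
    fix x assume "x \<in> ?R"
    then obtain l where l: "l \<in> set (subseqs ?es)" "edges_bd ends S l = {}" "x = indicator (set l \<inter> qedges T)"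
      by auto
    have "set l \<subseteq> qedges S"
      using l(1) subseqs_powset[of ?es] es by auto
    then have "indicator (set l) \<in> cycles1 ends S"
      using bd_indicator_edges[OF assms subseqs_distinctD[OF l(1) es(2)]] l(2)
      by (auto simp: cycles1_def chains1_def indicator_eq_zero_iff split: split_indicator)
    then show "x \<in> ?L"
      using l(3) push1 by (metis image_eqI)
  qed
qed

definition hrank_elim ::
    "('e::linorder \<Rightarrow> 'v::linorder \<times> 'v) \<Rightarrow> nat \<Rightarrow> ('v,'e) space \<Rightarrow> ('v,'e) space \<Rightarrow> nat" where
  "hrank_elim ends k S T =
    (if k = 0 then
       elim_rank (map (\<lambda>u. {vmap T u}) (sorted_list_of_set (qverts S)) @
                  map (edge_bd ends T) (sorted_list_of_set (qedges T)))
       - elim_rank (map (edge_bd ends T) (sorted_list_of_set (qedges T)))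
     else if k = 1 then
       elim_rank (map (\<lambda>es. set es \<inter> qedges T)
         (filter (\<lambda>es. edges_bd ends S es = {}) (subseqs (sorted_list_of_set (qedges S)))))
     else 0)"

lemma hrank_eq_hrank_elim:
  fixes S T :: "('v::linorder, 'e::linorder) space"
  assumes "finite (qverts S)" "finite (qedges S)" "finite (qedges T)"
  shows "hrank ends k S T = hrank_elim ends k S T"
proof -
  consider "k = 0" | "k = 1" | "k \<ge> 2"
    by linarith
  then show ?thesis
  proof cases
    case 1
    let ?bds = "map (edge_bd ends T) (sorted_list_of_set (qedges T))"
    let ?pts = "map (\<lambda>u. {vmap T u}) (sorted_list_of_set (qverts S))"
    have "Z.dim (indicator ` set (?pts @ ?bds)) = elim_rank (?pts @ ?bds)"
      by (rule dim_indicators_elim_rank) (auto simp: edge_bd_def)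
    moreover have "Z.dim (indicator ` set ?bds) = elim_rank ?bds"
      by (rule dim_indicators_elim_rank) (auto simp: edge_bd_def)
    ultimately show ?thesis
      using 1 assms by (simp add: hrank0_eq_dim_indicators hrank_elim_def image_Un)
  next
    case 2
    then show ?thesis
      using assms
      by (simp add: hrank_def zdim_def hrank_elim_def push1_cycles1_eq_indicators
          dim_indicators_elim_rank[symmetric])
  next
    case 3
    then show ?thesis
      by (simp add: hrank_def hrank_elim_def)
  qed
qed

lemma pdiag_eq_if_hrank_eq:
  assumes "length Ss = length Ts"
    and "\<And>i j. i \<le> j \<Longrightarrow> j < length Ss \<Longrightarrow>
      hrank ends k (Ss ! i) (Ss ! j) = hrank ends' k (Ts ! i) (Ts ! j)"
  shows "pdiag ends Ss k = pdiag ends' Ts k"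
proof -
  have "prk ends Ss k i j = prk ends' Ts k i j" for i j
    using assms by (auto simp: prk_def nat_le_eq_zle)
  then show ?thesis
    by (simp add: fun_eq_iff pdiag_def Let_def assms(1))
qed

section \<open>The FB-sequence is an hourglass sequence\<close>

lemma finite_fvals: "wf_graph V E ends \<Longrightarrow> finite (fvals V E fv fe)"
  by (simp add: wf_graph_def fvals_def)

lemma lev_less_lev:
  assumes "finite (fvals V E fv fe)" "j < i" "i < nlev V E fv fe"
  shows "lev V E fv fe j < lev V E fv fe i"
  using assms sorted_wrt_nth_less[OF strict_sorted_list_of_set, of j i "fvals V E fv fe"]
  by (simp add: lev_def nlev_def)

lemma lev_le_lev_iff:
  assumes "finite (fvals V E fv fe)" "i < nlev V E fv fe" "j < nlev V E fv fe"
  shows "lev V E fv fe j \<le> lev V E fv fe i \<longleftrightarrow> j \<le> i"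
  using assms lev_less_lev[of V E fv fe] by (metis linorder_not_less nless_le)

lemma fvals_eq_lev_image:
  assumes "finite (fvals V E fv fe)"
  shows "fvals V E fv fe = lev V E fv fe ` {..<nlev V E fv fe}"
  using assms set_sorted_list_of_set[OF assms]
  by (auto simp: lev_def nlev_def set_conv_nth)

lemma fvals_le_lev_iff:
  assumes "finite (fvals V E fv fe)" "x \<in> fvals V E fv fe" "i < nlev V E fv fe"
  shows "x \<le> lev V E fv fe i \<longleftrightarrow> (\<exists>j\<le>i. x = lev V E fv fe j)"
  using assms lev_le_lev_iff[OF assms(1,3)] fvals_eq_lev_image[OF assms(1)] by auto

lemma sg_Union_IC_atMost:
  assumes wf: "wf_graph V E ends" and filt: "filtration V E ends fv fe"
    and i: "i < nlev V E fv fe"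
  shows "sg_Union (IC V E ends fv fe ` {..i}) = sublevel V E fv fe i"
proof -
  let ?lev = "lev V E fv fe"
  have fin: "finite (fvals V E fv fe)"
    using wf by (rule finite_fvals)
  have mono: "?lev j \<le> ?lev i" if "j \<le> i" for j
    using lev_le_lev_iff[OF fin i, of j] that i by simp
  have le_iff: "x \<le> ?lev i \<longleftrightarrow> (\<exists>j\<le>i. x = ?lev j)" if "x \<in> fvals V E fv fe" for x
    using fvals_le_lev_iff[OF fin that i] .
  have endpoints: "fst (ends e) \<in> V \<and> snd (ends e) \<in> V \<and>
      fv (fst (ends e)) \<le> fe e \<and> fv (snd (ends e)) \<le> fe e" if "e \<in> E" for e
    using wf filt that by (auto simp: wf_graph_def filtration_def)
  have "(\<Union>j\<le>i. fst (IC V E ends fv fe j)) = {v\<in>V. fv v \<le> ?lev i}"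
  proof (rule set_eqI, rule iffI)
    fix x assume "x \<in> (\<Union>j\<le>i. fst (IC V E ends fv fe j))"
    then obtain j where "j \<le> i" "x \<in> fst (IC V E ends fv fe j)"
      by blast
    then show "x \<in> {v\<in>V. fv v \<le> ?lev i}"
      using mono[of j] endpoints by (fastforce simp: IC_def)
  next
    fix x assume "x \<in> {v\<in>V. fv v \<le> ?lev i}"
    then show "x \<in> (\<Union>j\<le>i. fst (IC V E ends fv fe j))"
      using le_iff[of "fv x"] by (auto simp: IC_def fvals_def)
  qed
  moreover have "(\<Union>j\<le>i. snd (IC V E ends fv fe j)) = {e\<in>E. fe e \<le> ?lev i}"
    using mono le_iff by (auto simp: IC_def fvals_def)
  ultimately show ?thesis
    by (simp add: sg_Union_def sublevel_def image_image)
qed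

lemma sg_Union_IC_all:
  assumes "wf_graph V E ends" "filtration V E ends fv fe"
  shows "sg_Union (IC V E ends fv fe ` {..<nlev V E fv fe}) = (V, E)"
proof (cases "nlev V E fv fe")
  case 0
  then have "fvals V E fv fe = {}"
    using finite_fvals[OF assms(1)] by (simp add: nlev_def)
  then show ?thesis
    using 0 by (simp add: fvals_def sg_Union_def)
next
  case (Suc n)
  have fin: "finite (fvals V E fv fe)"
    using assms(1) by (rule finite_fvals)
  have "x \<le> lev V E fv fe n" if "x \<in> fvals V E fv fe" for x
    using fvals_eq_lev_image[OF fin] that lev_le_lev_iff[OF fin, of n] Suc by auto
  then have "sublevel V E fv fe n = (V, E)"
    by (auto simp: sublevel_def fvals_def)
  then show ?thesis
    using sg_Union_IC_atMost[OF assms, of n] Suc by (simp add: lessThan_Suc_atMost)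
qed

definition fb_schedule :: "nat \<Rightarrow> hg_op list" where
  "fb_schedule N = map Inc [0..<N] @ map Con (rev [0..<N])"

lemma valid_fb_schedule: "valid_schedule N (fb_schedule N)"
proof -
  have "Inc j \<in> set (take p (fb_schedule N))"
    if "p < length (fb_schedule N)" "fb_schedule N ! p = Con j" for p j
  proof -
    have "N \<le> p" "j < N"
      using that nth_mem[OF that(1)] by (auto simp: fb_schedule_def nth_append split: if_splits)
    then show ?thesis
      by (simp add: fb_schedule_def take_all)
  qed
  then show ?thesis
    by (auto simp: valid_schedule_def fb_schedule_def distinct_map inj_on_def)
qed

lemma hg_space_fb_schedule_including:
  assumes "p \<le> N"
  shows "hg_space ICf (fb_schedule N) p = (sg_Union (ICf ` {..<p}), ({}, {}))"
proof -
  have "set (take p (fb_schedule N)) = Inc ` {..<p}"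
    using assms by (auto simp: fb_schedule_def take_map)
  then show ?thesis
    by (simp add: hg_space_def) (auto simp: sg_Union_def intro!: arg_cong[where f = sg_Union])
qed

lemma hg_space_fb_schedule_contracting:
  assumes "m \<le> N"
  shows "hg_space ICf (fb_schedule N) (N + m) = (sg_Union (ICf ` {..<N}), sg_Union (ICf ` {N - m..<N}))"
proof -
  have "set (take (N + m) (fb_schedule N)) = Inc ` {..<N} \<union> Con ` {N - m..<N}"
    using assms by (auto simp: fb_schedule_def take_map take_rev)
  then show ?thesis
    by (simp add: hg_space_def image_Un) (auto intro!: arg_cong[where f = sg_Union])
qed

theorem hg_seq_fb_schedule:
  assumes "wf_graph V E ends" "filtration V E ends fv fe"
  shows "hg_seq (IC V E ends fv fe) (fb_schedule (nlev V E fv fe)) =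
    (({}, {}), ({}, {})) # fb_seq V E ends fv fe"
    (is "hg_seq ?IC (fb_schedule ?N) = ?fb")
proof (rule nth_equalityI)
  show "length (hg_seq ?IC (fb_schedule ?N)) = length ?fb"
    by (simp add: hg_seq_def fb_seq_def fb_schedule_def)
next
  fix p assume "p < length (hg_seq ?IC (fb_schedule ?N))"
  then have p: "p \<le> 2 * ?N" and hg: "hg_seq ?IC (fb_schedule ?N) ! p = hg_space ?IC (fb_schedule ?N) p"
    by (simp_all add: hg_seq_def fb_schedule_def nth_map_upt del: upt_Suc)
  consider "p = 0" | "0 < p" "p \<le> ?N" | "?N < p"
    by linarith
  then show "hg_seq ?IC (fb_schedule ?N) ! p = ?fb ! p"
  proof cases
    case 1
    then show ?thesis
      using hg hg_space_fb_schedule_including[of 0 ?N ?IC] by (simp add: sg_Union_def)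
  next
    case 2
    then obtain i where i: "p = Suc i" "i < ?N"
      using gr0_implies_Suc by fastforce
    then show ?thesis
      using hg 2 hg_space_fb_schedule_including[of p ?N ?IC] sg_Union_IC_atMost[OF assms i(2)]
      by (simp add: fb_seq_def nth_append lessThan_Suc_atMost)
  next
    case 3
    define m where "m = p - Suc ?N"
    have m: "p = ?N + Suc m" "m < ?N"
      using p 3 by (simp_all add: m_def)
    then show ?thesis
      using hg hg_space_fb_schedule_contracting[of "Suc m" ?N ?IC] sg_Union_IC_all[OF assms]
      by (simp add: fb_seq_def nth_append rev_nth)
  qed
qed

section \<open>Two graphs told apart by an hourglass schedule\<close>

lemma filtration_degree: "filtration V E ends (deg_fv E ends) (deg_fe E ends)"
  by (simp add: filtration_def deg_fe_def)

lemma hg_space_eq_images: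
  "hg_space ICf ops p =
    (sg_Union (ICf ` {j. Inc j \<in> set (take p ops)}), sg_Union (ICf ` {j. Con j \<in> set (take p ops)}))"
  by (simp add: hg_space_def setcompr_eq_image)

lemma Collect_mem_insert:
  "{x \<in> insert a A. P x} = (if P a then insert a {x \<in> A. P x} else {x \<in> A. P x})"
  by auto

lemma fb_schedule_3: "fb_schedule 3 = [Inc 0, Inc 1, Inc 2, Con 2, Con 1, Con 0]"
  by (simp add: fb_schedule_def upt_rec numeral_eq_Suc)

definition distinguishing_schedule :: "hg_op list" where
  "distinguishing_schedule = [Inc 0, Inc 1, Inc 2, Con 0, Con 2, Con 1]"

lemma valid_distinguishing_schedule: "valid_schedule 3 distinguishing_schedule"
  by (simp add: valid_schedule_def distinguishing_schedule_def All_less_Suc numeral_eq_Suc)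

definition ends_G :: "nat \<Rightarrow> nat \<times> nat" where
  "ends_G e = (if e = 0 then (0, 0) else if e = 1 then (0, 1) else (2, 2))"

definition V_G :: "nat set" where "V_G = {0, 1, 2}"

definition E_G :: "nat set" where "E_G = {0, 1, 2}"

definition fv_G :: "nat \<Rightarrow> real" where
  "fv_G v = (if v = 0 then 3 else if v = 1 then 1 else if v = 2 then 2 else 0)"

definition fe_G :: "nat \<Rightarrow> real" where
  "fe_G e = (if e = 0 \<or> e = 1 then 3 else 2)"

lemma deg_fv_G: "deg_fv E_G ends_G = fv_G"
  unfolding fun_eq_iff deg_fv_def degree_def E_G_def
  by (simp only: Collect_mem_insert) (auto simp: ends_G_def fv_G_def)

lemma deg_fe_G: "deg_fe E_G ends_G = fe_G"
  by (auto simp: fun_eq_iff deg_fe_def deg_fv_G fv_G_def fe_G_def ends_G_def)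

lemma wf_graph_G: "wf_graph V_G E_G ends_G"
  by (simp add: wf_graph_def V_G_def E_G_def ends_G_def)

lemma fvals_G: "fvals V_G E_G fv_G fe_G = {1, 2, 3}"
  by (auto simp: fvals_def V_G_def E_G_def fv_G_def fe_G_def)

lemma nlev_G: "nlev V_G E_G fv_G fe_G = 3"
  by (simp add: nlev_def fvals_G)

lemma lev_G:
  "lev V_G E_G fv_G fe_G 0 = 1" "lev V_G E_G fv_G fe_G 1 = 2" "lev V_G E_G fv_G fe_G 2 = 3"
  by (simp_all add: lev_def fvals_G)

lemma IC_G:
  "IC V_G E_G ends_G fv_G fe_G 0 = ({1}, {})"
  "IC V_G E_G ends_G fv_G fe_G 1 = ({2}, {2})"
  "IC V_G E_G ends_G fv_G fe_G 2 = ({0, 1}, {0, 1})"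
  unfolding IC_def lev_G by (auto simp: V_G_def E_G_def fv_G_def fe_G_def ends_G_def)

lemma fb_seq_G:
  "fb_seq V_G E_G ends_G fv_G fe_G =
    [(({1}, {}), {}, {}), (({1, 2}, {2}), {}, {}), (({0, 1, 2}, {0, 1, 2}), {}, {}),
     (({0, 1, 2}, {0, 1, 2}), {0, 1}, {0, 1}), (({0, 1, 2}, {0, 1, 2}), {0, 1, 2}, {0, 1, 2}),
     (({0, 1, 2}, {0, 1, 2}), {0, 1, 2}, {0, 1, 2})]"
  using hg_seq_fb_schedule[OF wf_graph_G filtration_degree[of V_G E_G ends_G, unfolded deg_fv_G deg_fe_G]]
  \<comment> \<open>simp writes the index 1 as Suc 0 here, hence the second copy of IC_G\<close>
  by (simp add: nlev_G fb_schedule_3 hg_seq_def hg_space_eq_images upt_rec IC_G IC_G[simplified] sg_Union_def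
      Collect_disj_eq insert_commute)

lemma hg_seq_G_distinguishing:
  "hg_seq (IC V_G E_G ends_G fv_G fe_G) distinguishing_schedule =
    [(({}, {}), {}, {}), (({1}, {}), {}, {}), (({1, 2}, {2}), {}, {}),
     (({0, 1, 2}, {0, 1, 2}), {}, {}), (({0, 1, 2}, {0, 1, 2}), {1}, {}),
     (({0, 1, 2}, {0, 1, 2}), {0, 1}, {0, 1}), (({0, 1, 2}, {0, 1, 2}), {0, 1, 2}, {0, 1, 2})]"
  by (simp add: distinguishing_schedule_def hg_seq_def hg_space_eq_images upt_rec IC_G IC_G[simplified]
      sg_Union_def Collect_disj_eq insert_commute)

definition ends_H :: "nat \<Rightarrow> nat \<times> nat" where
  "ends_H e = (if e = 0 then (0, 0) else if e = 1 then (1, 2) else if e = 2 then (2, 3) else (3, 3))"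

definition V_H :: "nat set" where "V_H = {0, 1, 2, 3}"

definition E_H :: "nat set" where "E_H = {0, 1, 2, 3}"

definition fv_H :: "nat \<Rightarrow> real" where
  "fv_H v = (if v = 0 then 2 else if v = 1 then 1 else if v = 2 then 2 else if v = 3 then 3 else 0)"

definition fe_H :: "nat \<Rightarrow> real" where
  "fe_H e = (if e = 0 \<or> e = 1 then 2 else 3)"

lemma deg_fv_H: "deg_fv E_H ends_H = fv_H"
  unfolding fun_eq_iff deg_fv_def degree_def E_H_def
  by (simp only: Collect_mem_insert) (auto simp: ends_H_def fv_H_def)

lemma deg_fe_H: "deg_fe E_H ends_H = fe_H"
  by (auto simp: fun_eq_iff deg_fe_def deg_fv_H fv_H_def fe_H_def ends_H_def)

lemma wf_graph_H: "wf_graph V_H E_H ends_H"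
  by (simp add: wf_graph_def V_H_def E_H_def ends_H_def)

lemma fvals_H: "fvals V_H E_H fv_H fe_H = {1, 2, 3}"
  by (auto simp: fvals_def V_H_def E_H_def fv_H_def fe_H_def)

lemma nlev_H: "nlev V_H E_H fv_H fe_H = 3"
  by (simp add: nlev_def fvals_H)

lemma lev_H:
  "lev V_H E_H fv_H fe_H 0 = 1" "lev V_H E_H fv_H fe_H 1 = 2" "lev V_H E_H fv_H fe_H 2 = 3"
  by (simp_all add: lev_def fvals_H)

lemma IC_H:
  "IC V_H E_H ends_H fv_H fe_H 0 = ({1}, {})"
  "IC V_H E_H ends_H fv_H fe_H 1 = ({0, 1, 2}, {0, 1})"
  "IC V_H E_H ends_H fv_H fe_H 2 = ({2, 3}, {2, 3})"
  unfolding IC_def lev_H by (auto simp: V_H_def E_H_def fv_H_def fe_H_def ends_H_def)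

lemma fb_seq_H:
  "fb_seq V_H E_H ends_H fv_H fe_H =
    [(({1}, {}), {}, {}), (({0, 1, 2}, {0, 1}), {}, {}), (({0, 1, 2, 3}, {0, 1, 2, 3}), {}, {}),
     (({0, 1, 2, 3}, {0, 1, 2, 3}), {2, 3}, {2, 3}),
     (({0, 1, 2, 3}, {0, 1, 2, 3}), {0, 1, 2, 3}, {0, 1, 2, 3}),
     (({0, 1, 2, 3}, {0, 1, 2, 3}), {0, 1, 2, 3}, {0, 1, 2, 3})]"
  using hg_seq_fb_schedule[OF wf_graph_H filtration_degree[of V_H E_H ends_H, unfolded deg_fv_H deg_fe_H]]
  by (simp add: nlev_H fb_schedule_3 hg_seq_def hg_space_eq_images upt_rec IC_H IC_H[simplified]
      sg_Union_def Collect_disj_eq insert_commute)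

lemma hg_seq_H_distinguishing:
  "hg_seq (IC V_H E_H ends_H fv_H fe_H) distinguishing_schedule =
    [(({}, {}), {}, {}), (({1}, {}), {}, {}), (({0, 1, 2}, {0, 1}), {}, {}),
     (({0, 1, 2, 3}, {0, 1, 2, 3}), {}, {}), (({0, 1, 2, 3}, {0, 1, 2, 3}), {1}, {}),
     (({0, 1, 2, 3}, {0, 1, 2, 3}), {1, 2, 3}, {2, 3}),
     (({0, 1, 2, 3}, {0, 1, 2, 3}), {0, 1, 2, 3}, {0, 1, 2, 3})]"
  by (simp add: distinguishing_schedule_def hg_seq_def hg_space_eq_images upt_rec IC_H IC_H[simplified]
      sg_Union_def Collect_disj_eq insert_commute)

lemmas hrank_elim_simps = hrank_eq_hrank_elim hrank_elim_def qverts_def qedges_def edges_bd_def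
  edge_bd_def qv_def vmap_def insert_Diff_if Int_insert_left

lemma fb_seq_hranks_G_H:
  assumes "i \<le> j" "j < 6"
  shows "hrank ends_G k (fb_seq V_G E_G ends_G fv_G fe_G ! i) (fb_seq V_G E_G ends_G fv_G fe_G ! j) =
    hrank ends_H k (fb_seq V_H E_H ends_H fv_H fe_H ! i) (fb_seq V_H E_H ends_H fv_H fe_H ! j)"
proof (cases "k \<ge> 2")
  case True
  then show ?thesis
    by (simp add: hrank_def)
next
  case False
  then have "k = 0 \<or> k = 1"
    by linarith
  then have "\<forall>j\<in>{..<6}. \<forall>i\<in>{..j}.
    hrank ends_G k (fb_seq V_G E_G ends_G fv_G fe_G ! i) (fb_seq V_G E_G ends_G fv_G fe_G ! j) =
    hrank ends_H k (fb_seq V_H E_H ends_H fv_H fe_H ! i) (fb_seq V_H E_H ends_H fv_H fe_H ! j)"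
    by (elim disjE) (simp_all add: lessThan_nat_numeral atMost_nat_numeral lessThan_Suc atMost_Suc
        fb_seq_G fb_seq_H hrank_elim_simps ends_G_def ends_H_def)
  then show ?thesis
    using assms by auto
qed

lemma pdiag_G_distinguishing:
  "pdiag ends_G (hg_seq (IC V_G E_G ends_G fv_G fe_G) distinguishing_schedule) 1 (5, 5) = 0"
  unfolding hg_seq_G_distinguishing by (simp add: pdiag_def prk_def hrank_elim_simps ends_G_def)

lemma pdiag_H_distinguishing:
  "pdiag ends_H (hg_seq (IC V_H E_H ends_H fv_H fe_H) distinguishing_schedule) 1 (5, 5) = 1"
  unfolding hg_seq_H_distinguishing by (simp add: pdiag_def prk_def hrank_elim_simps ends_H_def)

lemma degree_graphs_fb_equal_hourglass_distinct:
  "\<exists>(V1 :: nat set) (E1 :: nat set) ends1 (V2 :: nat set) (E2 :: nat set) ends2.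
      wf_graph V1 E1 ends1 \<and> wf_graph V2 E2 ends2 \<and>
      (\<forall>k. pdiag ends1 (fb_seq V1 E1 ends1 (deg_fv E1 ends1) (deg_fe E1 ends1)) k =
           pdiag ends2 (fb_seq V2 E2 ends2 (deg_fv E2 ends2) (deg_fe E2 ends2)) k) \<and>
      (\<exists>ops. valid_schedule (nlev V1 E1 (deg_fv E1 ends1) (deg_fe E1 ends1)) ops \<and>
             valid_schedule (nlev V2 E2 (deg_fv E2 ends2) (deg_fe E2 ends2)) ops \<and>
             (\<exists>k. pdiag ends1 (hg_seq (IC V1 E1 ends1 (deg_fv E1 ends1) (deg_fe E1 ends1)) ops) k \<noteq>
                  pdiag ends2 (hg_seq (IC V2 E2 ends2 (deg_fv E2 ends2) (deg_fe E2 ends2)) ops) k))"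
proof (intro exI conjI)
  show "wf_graph V_G E_G ends_G" "wf_graph V_H E_H ends_H"
    by (rule wf_graph_G, rule wf_graph_H)
  show "\<forall>k. pdiag ends_G (fb_seq V_G E_G ends_G (deg_fv E_G ends_G) (deg_fe E_G ends_G)) k =
      pdiag ends_H (fb_seq V_H E_H ends_H (deg_fv E_H ends_H) (deg_fe E_H ends_H)) k"
    unfolding deg_fv_G deg_fe_G deg_fv_H deg_fe_H using fb_seq_hranks_G_H
    by (intro allI pdiag_eq_if_hrank_eq) (simp_all add: fb_seq_G fb_seq_H)
  show "valid_schedule (nlev V_G E_G (deg_fv E_G ends_G) (deg_fe E_G ends_G)) distinguishing_schedule"
    "valid_schedule (nlev V_H E_H (deg_fv E_H ends_H) (deg_fe E_H ends_H)) distinguishing_schedule"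
    unfolding deg_fv_G deg_fe_G deg_fv_H deg_fe_H nlev_G nlev_H by (rule valid_distinguishing_schedule)+
  show "pdiag ends_G (hg_seq (IC V_G E_G ends_G (deg_fv E_G ends_G) (deg_fe E_G ends_G)) distinguishing_schedule) 1 \<noteq>
      pdiag ends_H (hg_seq (IC V_H E_H ends_H (deg_fv E_H ends_H) (deg_fe E_H ends_H)) distinguishing_schedule) 1"
    unfolding deg_fv_G deg_fe_G deg_fv_H deg_fe_H
    using pdiag_G_distinguishing pdiag_H_distinguishing by (metis zero_neq_one)
qed

theorem proposition2:
  shows
  "(\<forall>(V :: 'v set) (E :: 'e set) ends fv fe.
      wf_graph V E ends \<and> filtration V E ends fv fe \<longrightarrow>
      (\<exists>ops. valid_schedule (nlev V E fv fe) ops \<and>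
             hg_seq (IC V E ends fv fe) ops = (({}, {}), ({}, {})) # fb_seq V E ends fv fe))
   \<and>
   (\<exists>(V1 :: nat set) (E1 :: nat set) ends1 (V2 :: nat set) (E2 :: nat set) ends2.
      wf_graph V1 E1 ends1 \<and> wf_graph V2 E2 ends2 \<and>
      (\<forall>k. pdiag ends1 (fb_seq V1 E1 ends1 (deg_fv E1 ends1) (deg_fe E1 ends1)) k =
           pdiag ends2 (fb_seq V2 E2 ends2 (deg_fv E2 ends2) (deg_fe E2 ends2)) k) \<and>
      (\<exists>ops. valid_schedule (nlev V1 E1 (deg_fv E1 ends1) (deg_fe E1 ends1)) ops \<and>
             valid_schedule (nlev V2 E2 (deg_fv E2 ends2) (deg_fe E2 ends2)) ops \<and>
             (\<exists>k. pdiag ends1 (hg_seq (IC V1 E1 ends1 (deg_fv E1 ends1) (deg_fe E1 ends1)) ops) k \<noteq>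
                  pdiag ends2 (hg_seq (IC V2 E2 ends2 (deg_fv E2 ends2) (deg_fe E2 ends2)) ops) k)))"
  using valid_fb_schedule hg_seq_fb_schedule degree_graphs_fb_equal_hourglass_distinct by blast

end
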